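(* Let $W$ be a (1-safe) DAW-net and $\mathrm{bc}(W)$ its $\mathcal{BC}$ encoding. For any $\ell\ge0$, if $X$ is a stable model of $P_\ell(\mathrm{bc}(W))$, then $$\rho=\Phi^-_0(X)\xrightarrow{\tau_0(X)}\Phi^-_1(X)\xrightarrow{\tau_1(X)}\cdots\xrightarrow{\tau_{\ell-1}(X)}\Phi^-_\ell(X)$$ is a sequence of valid firings of $W$ of length $\ell$.
   Context: **DAW-nets.** Data model $\mathcal{D}=(\mathcal{V},\Delta,\mathrm{dm},\mathrm{ord})$: variables; finite domains via total surjective $\mathrm{dm}$; partial orders $\le_{\Delta_i}$ on some domains. Assignments: partial $\eta$ with $\eta(v)\in\mathrm{dm}(v)$. Guards $\Phi::=\mathit{true}\mid\mathrm{def}(v)\mid t_1=t_2\mid t_1\le t_2\mid\neg\Phi\mid\Phi\wedge\Phi$; with $t[\eta]=\eta(t)$ for variables on which $\eta$ is defined and $t$ otherwise: $\mathrm{def}(v)$ iff $\eta(v)$ defined; $t_1=t_2$ iff $t_1[\eta],t_2[\eta]$ are equal constants; $t_1\le t_2$ iff both lie in some ordered $\Delta_i$ and $t_1[\eta]\le_{\Delta_i}t_2[\eta]$. A DAW-net $W=\langle\mathcal{D},(P,T,F),\mathrm{wr},\mathrm{gd}\rangle$: workflow Petri net with places $\mathit{start},\mathit{sink}$ (presets ${}^\bullet t$, postsets $t^\bullet$), partial functions $\mathrm{wr}(t)$ with $\mathrm{wr}(t)(v)\subseteq\mathrm{dm}(v)$, guards $\mathrm{gd}(t)$. A firing $(M,\eta)\xrightarrow{t}(M',\eta')$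 is valid iff $\{p\mid M(p)>0\}\supseteq{}^\bullet t$; $\mathcal{D},\eta\models\mathrm{gd}(t)$; $M'(p)=M(p)-1$ on ${}^\bullet t\setminus t^\bullet$, $M(p)+1$ on $t^\bullet\setminus{}^\bullet t$, else $M(p)$; $\mathrm{dom}(\eta')=\mathrm{dom}(\eta)\cup\{v\mid\mathrm{wr}(t)(v)\ne\emptyset\}\setminus\{v\mid\mathrm{wr}(t)(v)=\emptyset\}$, $\eta'(v)\in\mathrm{wr}(t)(v)$ for $v\in\mathrm{dom}(\mathrm{wr}(t))$, else $\eta'(v)=\eta(v)$. $\mathcal{V}'$: finite set of variables of $W$; $\mathrm{adm}(v)=\bigcup_t\mathrm{wr}(t)(v)$. $W$ is assumed 1-safe. **$\mathcal{BC}$ semantics.** Laws: dynamic "$A_0$ after $A'_1,\dots,A'_n$ ifcons $A_{n+1},\dots,A_m$", static "$A_0$ if ... ifcons ...", "initially $f=v$". $P_\ell(B)$ is the disjunctive program (classical $\neg$, default $\sim$) containing: static laws as $i{:}A_0\leftarrow i{:}A_1,\dots,i{:}A_n,\sim\neg(i{:}A_{n+1}),\dots,\sim\neg(i{:}A_m)$, $0\le i\le\ell$; dynamic laws as $i{+}1{:}A_0\leftarrow i{:}A'_1,\dots,i{:}A'_n,\sim\neg(i{+}1{:}A_{n+1}),\dots,\sim\neg(i{+}1{:}A_m)$, $0\le i<\ell$ (constraints if $A_0$ is false); facts $0{:}f=v$ for "initially $f=v$"; $0{:}f=v\vee\neg(0{:}f=v)$; $i{:}a\vee\neg(i{:}a)$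 for action constants, $i<\ell$; for $i\le\ell$ and fluent $f$ with domain $v_1,\dots,v_k$: $\leftarrow\sim(i{:}f=v_1),\dots,\sim(i{:}f=v_k)$ and $\neg(i{:}f=v)\leftarrow i{:}f=w$ ($v\neq w$). $\sigma_i(X)=\{f\mapsto o\mid(i{:}f=o)\in X\}$. **The encoding $\mathrm{bc}(W)$.** Fluents $v\in\mathcal{V}'$ (domain $\mathrm{adm}(v)\cup\{\mathrm{null}\}$), Boolean fluents $p\in P$ and $\mathit{trans}$; action constants $t\in T$. Laws: "$v=o$ after $v=o$ ifcons $v=o$"; "$p=o$ after $p=o$ ifcons $p=o$"; for each $t$: "$p=\mathrm{false}$ after $t$" ($p\in{}^\bullet t\setminus t^\bullet$), "$p=\mathrm{true}$ after $t$" ($p\in t^\bullet\setminus{}^\bullet t$), "$v=d$ after $t$ ifcons $v=d$" ($d\in\mathrm{wr}(t)(v)$), "$v=\mathrm{null}$ after $t$" ($\mathrm{wr}(t)(v)=\emptyset$), "false after $t$ ifcons $v=d$" ($\mathrm{wr}(t)(v)\ne\emptyset$, $d\in\{\mathrm{null}\}\cup\mathrm{adm}(v)\setminus\mathrm{wr}(t)(v)$), "false after $t,s$" ($t\neq s$), "false after $t,p=\mathrm{false}$" ($p\in{}^\bullet t$), "$\mathit{trans}=\mathrm{true}$ after $t$"; "initially $\mathit{start}=\mathrm{true}$", "initially $p=\mathrm{false}$" ($p\ne\mathit{start}$), "initially $v=\mathrm{null}$", "initially $\mathit{trans}=\mathrm{true}$"; and for each $t$ with $\mathrm{gd}(t)\not\equiv\mathit{true}$,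 for a chosen formula $\bigvee_k t^k_1\wedge\dots\wedge t^k_{n_k}$ equivalent to $\neg\mathrm{gd}(t)$ with terms $v=o$ or $\neg\mathrm{def}(v)$, the laws "false after $t,[\![t^k_1]\!],\dots,[\![t^k_{n_k}]\!]$", with $[\![v=o]\!]=(v=o)$, $[\![\neg\mathrm{def}(v)]\!]=(v=\mathrm{null})$. **Inverse mapping.** For a stable model $X$ of $P_\ell(\mathrm{bc}(W))$ and $0\le i\le\ell$, $\Phi^-_i(X)=(M_i,\eta_i)$ with $M_i(p)=1$ if $\sigma_i(X)(p)=\mathrm{true}$ and $M_i(p)=0$ if $\sigma_i(X)(p)=\mathrm{false}$ ($p\in P$), and $\eta_i=\{(v,o)\mid v\in\mathcal{V}',\sigma_i(X)(v)=o,o\ne\mathrm{null}\}$; for $0\le i<\ell$, $\tau_i(X)$ is the action constant $a$ with $(i{:}a)\in X$. *)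

theory Defs
  imports Main
begin

section \<open>DAW-nets\<close>

text \<open>Data model (V, Delta, dm, ord). Domains are sets of constants of type 'd;
  ord gives (partially) the partial orders on some of the domains.\<close>
record ('v,'d) datamodel =
  DV    :: "'v set"
  Delta :: "'d set set"
  dm    :: "'v \<Rightarrow> 'd set"
  ord   :: "'d set \<Rightarrow> ('d \<times> 'd) set option"

definition wf_datamodel :: "('v,'d) datamodel \<Rightarrow> bool" where
  "wf_datamodel D \<longleftrightarrow>
     (\<forall>v\<in>DV D. dm D v \<in> Delta D) \<and> Delta D \<subseteq> dm D ` DV D \<and>
     (\<forall>X\<in>Delta D. finite X) \<and>
     (\<forall>X R. ord D X = Some R \<longrightarrow> X \<in> Delta D \<and> partial_order_on X R)"

datatype ('v,'d) gterm = Var 'v | Const 'd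

datatype ('v,'d) guard =
    GTrue
  | GDef 'v
  | GEq "('v,'d) gterm" "('v,'d) gterm"
  | GLeq "('v,'d) gterm" "('v,'d) gterm"
  | GNot "('v,'d) guard"
  | GAnd "('v,'d) guard" "('v,'d) guard"

type_synonym ('v,'d) assignment = "'v \<Rightarrow> 'd option"

fun tsubst :: "('v,'d) assignment \<Rightarrow> ('v,'d) gterm \<Rightarrow> ('v,'d) gterm" where
  "tsubst \<eta> (Var v) = (case \<eta> v of Some c \<Rightarrow> Const c | None \<Rightarrow> Var v)"
| "tsubst \<eta> (Const c) = Const c"

fun holds :: "('v,'d) datamodel \<Rightarrow> ('v,'d) assignment \<Rightarrow> ('v,'d) guard \<Rightarrow> bool" where
  "holds D \<eta> GTrue = True"
| "holds D \<eta> (GDef v) = (\<eta> v \<noteq> None)"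
| "holds D \<eta> (GEq t1 t2) =
     (\<exists>c. tsubst \<eta> t1 = Const c \<and> tsubst \<eta> t2 = Const c)"
| "holds D \<eta> (GLeq t1 t2) =
     (\<exists>c1 c2 X R. tsubst \<eta> t1 = Const c1 \<and> tsubst \<eta> t2 = Const c2 \<and>
        X \<in> Delta D \<and> ord D X = Some R \<and> c1 \<in> X \<and> c2 \<in> X \<and> (c1, c2) \<in> R)"
| "holds D \<eta> (GNot g) = (\<not> holds D \<eta> g)"
| "holds D \<eta> (GAnd g1 g2) = (holds D \<eta> g1 \<and> holds D \<eta> g2)"

fun gvars :: "('v,'d) guard \<Rightarrow> 'v set" where
  "gvars GTrue = {}"
| "gvars (GDef v) = {v}"
| "gvars (GEq t1 t2) = {v. Var v = t1 \<or> Var v = t2}"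
| "gvars (GLeq t1 t2) = {v. Var v = t1 \<or> Var v = t2}"
| "gvars (GNot g) = gvars g"
| "gvars (GAnd g1 g2) = gvars g1 \<union> gvars g2"

definition is_assignment :: "('v,'d) datamodel \<Rightarrow> ('v,'d) assignment \<Rightarrow> bool" where
  "is_assignment D \<eta> \<longleftrightarrow> dom \<eta> \<subseteq> DV D \<and> (\<forall>v c. \<eta> v = Some c \<longrightarrow> c \<in> dm D v)"

text \<open>A DAW-net: the flow relation F is split into arcs place->transition (FIn)
  and transition->place (FOut); wr t is a partial function from variables to sets
  of values.\<close>
record ('v,'d,'p,'t) dawnet =
  dmod   :: "('v,'d) datamodel"
  places :: "'p set"
  trans  :: "'t set"
  FIn    :: "('p \<times> 't) set"
  FOut   :: "('t \<times> 'p) set"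
  start  :: 'p
  sink   :: 'p
  wr     :: "'t \<Rightarrow> 'v \<Rightarrow> 'd set option"
  gd     :: "'t \<Rightarrow> ('v,'d) guard"

definition preset :: "('v,'d,'p,'t) dawnet \<Rightarrow> 't \<Rightarrow> 'p set" where
  "preset W t = {p. (p, t) \<in> FIn W}"

definition postset :: "('v,'d,'p,'t) dawnet \<Rightarrow> 't \<Rightarrow> 'p set" where
  "postset W t = {p. (t, p) \<in> FOut W}"

definition flow_graph :: "('v,'d,'p,'t) dawnet \<Rightarrow> ('p + 't) rel" where
  "flow_graph W = {(Inl p, Inr t) | p t. (p, t) \<in> FIn W} \<union> {(Inr t, Inl p) | t p. (t, p) \<in> FOut W}"

definition wf_dawnet :: "('v,'d,'p,'t) dawnet \<Rightarrow> bool" where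
  "wf_dawnet W \<longleftrightarrow>
     wf_datamodel (dmod W) \<and> finite (places W) \<and> finite (trans W) \<and>
     FIn W \<subseteq> places W \<times> trans W \<and> FOut W \<subseteq> trans W \<times> places W \<and>
     start W \<in> places W \<and> sink W \<in> places W \<and>
     (\<forall>t. (t, start W) \<notin> FOut W) \<and> (\<forall>t. (sink W, t) \<notin> FIn W) \<and>
     (\<forall>x \<in> Inl ` places W \<union> Inr ` trans W.
        (Inl (start W), x) \<in> (flow_graph W)\<^sup>* \<and> (x, Inl (sink W)) \<in> (flow_graph W)\<^sup>*) \<and>
     (\<forall>t\<in>trans W. dom (wr W t) \<subseteq> DV (dmod W) \<and>
        (\<forall>v S. wr W t v = Some S \<longrightarrow> S \<subseteq> dm (dmod W) v) \<and>
        gvars (gd W t) \<subseteq> DV (dmod W))"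

type_synonym 'p marking = "'p \<Rightarrow> nat"

definition valid_firing ::
  "('v,'d,'p,'t) dawnet \<Rightarrow> 'p marking \<times> ('v,'d) assignment \<Rightarrow> 't
     \<Rightarrow> 'p marking \<times> ('v,'d) assignment \<Rightarrow> bool" where
  "valid_firing W C t C' \<longleftrightarrow>
     (case C of (M, \<eta>) \<Rightarrow> case C' of (M', \<eta>') \<Rightarrow>
       t \<in> trans W \<and>
       preset W t \<subseteq> {p. M p > 0} \<and>
       holds (dmod W) \<eta> (gd W t) \<and>
       (\<forall>p\<in>places W.
          M' p = (if p \<in> preset W t - postset W t then M p - 1
                  else if p \<in> postset W t - preset W t then M p + 1
                  else M p)) \<and>
       dom \<eta>' = (dom \<eta> \<union> {v. \<exists>S. wr W t v = Some S \<and> S \<noteq> {}}) - {v. wr W t v = Some {}} \<and>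
       (\<forall>v S. wr W t v = Some S \<and> S \<noteq> {} \<longrightarrow> (\<exists>d\<in>S. \<eta>' v = Some d)) \<and>
       (\<forall>v. wr W t v = None \<longrightarrow> \<eta>' v = \<eta> v))"

definition initial_config :: "('v,'d,'p,'t) dawnet \<Rightarrow> 'p marking \<times> ('v,'d) assignment" where
  "initial_config W = ((\<lambda>p. if p = start W then 1 else 0), Map.empty)"

inductive reachable :: "('v,'d,'p,'t) dawnet \<Rightarrow> 'p marking \<times> ('v,'d) assignment \<Rightarrow> bool"
  for W where
  init: "reachable W (initial_config W)"
| step: "reachable W C \<Longrightarrow> valid_firing W C t C' \<Longrightarrow> reachable W C'"

definition one_safe :: "('v,'d,'p,'t) dawnet \<Rightarrow> bool" where
  "one_safe W \<longleftrightarrow> (\<forall>M \<eta>. reachable W (M, \<eta>) \<longrightarrow> (\<forall>p\<in>places W. M p \<le> 1))"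

definition vars_of :: "('v,'d,'p,'t) dawnet \<Rightarrow> 'v set" where
  "vars_of W = (\<Union>t\<in>trans W. dom (wr W t) \<union> gvars (gd W t))"

definition adm :: "('v,'d,'p,'t) dawnet \<Rightarrow> 'v \<Rightarrow> 'd set" where
  "adm W v = (\<Union>t\<in>trans W. case wr W t v of Some S \<Rightarrow> S | None \<Rightarrow> {})"

section \<open>Disjunctive logic programs with classical and default negation\<close>

datatype 'a lit = Pos 'a | NegC 'a

text \<open>A rule: head (disjunction of literals; empty = constraint),
  positive body, and default-negated body (~L).\<close>
record 'a rule =
  rhead :: "'a lit set"
  rpos  :: "'a lit set"
  rnaf  :: "'a lit set"

definition consistent :: "'a lit set \<Rightarrow> bool" where
  "consistent X \<longleftrightarrow> (\<forall>a. \<not> (Pos a \<in> X \<and> NegC a \<in> X))"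

definition closed_under_reduct :: "'a rule set \<Rightarrow> 'a lit set \<Rightarrow> 'a lit set \<Rightarrow> bool" where
  "closed_under_reduct P X Y \<longleftrightarrow>
     (\<forall>r\<in>P. rnaf r \<inter> X = {} \<longrightarrow> rpos r \<subseteq> Y \<longrightarrow> rhead r \<inter> Y \<noteq> {})"

definition stable_model :: "'a rule set \<Rightarrow> 'a lit set \<Rightarrow> bool" where
  "stable_model P X \<longleftrightarrow> consistent X \<and> closed_under_reduct P X X \<and>
     (\<forall>Y. Y \<subseteq> X \<longrightarrow> closed_under_reduct P X Y \<longrightarrow> Y = X)"

section \<open>The action language BC and its translation P_l\<close>

text \<open>Atoms: f = v for a fluent constant f, or an (Boolean) action constant a.\<close>
datatype ('f,'val,'c) bcatom = FA 'f 'val | AA 'c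

text \<open>Laws; head None stands for false.\<close>
datatype ('f,'val,'c) bclaw =
    Static "('f,'val,'c) bcatom option" "('f,'val,'c) bcatom list" "('f,'val,'c) bcatom list"
  | Dynamic "('f,'val,'c) bcatom option" "('f,'val,'c) bcatom list" "('f,'val,'c) bcatom list"
  | Initially 'f 'val

type_synonym ('f,'val,'c) tatom = "nat \<times> ('f,'val,'c) bcatom"

fun law_rules :: "nat \<Rightarrow> ('f,'val,'c) bclaw \<Rightarrow> ('f,'val,'c) tatom rule set" where
  "law_rules l (Static h as bs) =
     {\<lparr> rhead = (case h of None \<Rightarrow> {} | Some a0 \<Rightarrow> {Pos (i, a0)}),
        rpos = (\<lambda>a. Pos (i, a)) ` set as,
        rnaf = (\<lambda>a. NegC (i, a)) ` set bs \<rparr> | i. i \<le> l}"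
| "law_rules l (Dynamic h as bs) =
     {\<lparr> rhead = (case h of None \<Rightarrow> {} | Some a0 \<Rightarrow> {Pos (Suc i, a0)}),
        rpos = (\<lambda>a. Pos (i, a)) ` set as,
        rnaf = (\<lambda>a. NegC (Suc i, a)) ` set bs \<rparr> | i. i < l}"
| "law_rules l (Initially f v) = {\<lparr> rhead = {Pos (0, FA f v)}, rpos = {}, rnaf = {} \<rparr>}"

definition P_l ::
  "nat \<Rightarrow> 'f set \<Rightarrow> ('f \<Rightarrow> 'val set) \<Rightarrow> 'c set \<Rightarrow> ('f,'val,'c) bclaw set
     \<Rightarrow> ('f,'val,'c) tatom rule set" where
  "P_l l Fl fdom Act B =
     (\<Union>L\<in>B. law_rules l L)
   \<union> {\<lparr> rhead = {Pos (0, FA f v), NegC (0, FA f v)}, rpos = {}, rnaf = {} \<rparr> | f v.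
        f \<in> Fl \<and> v \<in> fdom f}
   \<union> {\<lparr> rhead = {Pos (i, AA a), NegC (i, AA a)}, rpos = {}, rnaf = {} \<rparr> | i a.
        a \<in> Act \<and> i < l}
   \<union> {\<lparr> rhead = {}, rpos = {}, rnaf = (\<lambda>v. Pos (i, FA f v)) ` fdom f \<rparr> | i f.
        f \<in> Fl \<and> i \<le> l}
   \<union> {\<lparr> rhead = {NegC (i, FA f v)}, rpos = {Pos (i, FA f w)}, rnaf = {} \<rparr> | i f v w.
        f \<in> Fl \<and> v \<in> fdom f \<and> w \<in> fdom f \<and> v \<noteq> w \<and> i \<le> l}"

definition sigma :: "nat \<Rightarrow> ('f,'val,'c) tatom lit set \<Rightarrow> 'f \<Rightarrow> 'val" where
  "sigma i X f = (THE o'. Pos (i, FA f o') \<in> X)"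

section \<open>The encoding bc(W)\<close>

datatype ('v,'p) fluent = VarF 'v | PlaceF 'p | TransF
datatype 'd fval = DVal 'd | Null | BTrue | BFalse

definition bc_fluents :: "('v,'d,'p,'t) dawnet \<Rightarrow> ('v,'p) fluent set" where
  "bc_fluents W = VarF ` vars_of W \<union> PlaceF ` places W \<union> {TransF}"

fun bc_dom :: "('v,'d,'p,'t) dawnet \<Rightarrow> ('v,'p) fluent \<Rightarrow> 'd fval set" where
  "bc_dom W (VarF v) = DVal ` adm W v \<union> {Null}"
| "bc_dom W (PlaceF p) = {BTrue, BFalse}"
| "bc_dom W TransF = {BTrue, BFalse}"

text \<open>A term of a DNF disjunct: (v, Some o) stands for v = o, (v, None) for
  not def(v).\<close>
type_synonym ('v,'d) dnf_term = "'v \<times> 'd option"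

fun dnf_term_holds :: "('v,'d) assignment \<Rightarrow> ('v,'d) dnf_term \<Rightarrow> bool" where
  "dnf_term_holds \<eta> (v, Some o') = (\<eta> v = Some o')"
| "dnf_term_holds \<eta> (v, None) = (\<eta> v = None)"

fun enc_term :: "('v,'d) dnf_term \<Rightarrow> (('v,'p) fluent, 'd fval, 't) bcatom" where
  "enc_term (v, Some o') = FA (VarF v) (DVal o')"
| "enc_term (v, None) = FA (VarF v) Null"

definition guard_valid :: "('v,'d) datamodel \<Rightarrow> ('v,'d) guard \<Rightarrow> bool" where
  "guard_valid D g \<longleftrightarrow> (\<forall>\<eta>. is_assignment D \<eta> \<longrightarrow> holds D \<eta> g)"

definition admissible_dnf ::
  "('v,'d,'p,'t) dawnet \<Rightarrow> ('t \<Rightarrow> ('v,'d) dnf_term list list) \<Rightarrow> bool" where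
  "admissible_dnf W dnf \<longleftrightarrow>
     (\<forall>t\<in>trans W. \<not> guard_valid (dmod W) (gd W t) \<longrightarrow>
        (\<forall>c\<in>set (dnf t). \<forall>x\<in>set c. fst x \<in> vars_of W) \<and>
        (\<forall>\<eta>. is_assignment (dmod W) \<eta> \<longrightarrow>
           (\<not> holds (dmod W) \<eta> (gd W t) \<longleftrightarrow>
            (\<exists>c\<in>set (dnf t). \<forall>x\<in>set c. dnf_term_holds \<eta> x))))"

definition bc_laws ::
  "('v,'d,'p,'t) dawnet \<Rightarrow> ('t \<Rightarrow> ('v,'d) dnf_term list list)
     \<Rightarrow> (('v,'p) fluent, 'd fval, 't) bclaw set" where
  "bc_laws W dnf =
     {Dynamic (Some (FA (VarF v) o')) [FA (VarF v) o'] [FA (VarF v) o'] | v o'.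
        v \<in> vars_of W \<and> o' \<in> bc_dom W (VarF v)}
   \<union> {Dynamic (Some (FA (PlaceF p) o')) [FA (PlaceF p) o'] [FA (PlaceF p) o'] | p o'.
        p \<in> places W \<and> o' \<in> {BTrue, BFalse}}
   \<union> {Dynamic (Some (FA (PlaceF p) BFalse)) [AA t] [] | t p.
        t \<in> trans W \<and> p \<in> preset W t - postset W t}
   \<union> {Dynamic (Some (FA (PlaceF p) BTrue)) [AA t] [] | t p.
        t \<in> trans W \<and> p \<in> postset W t - preset W t}
   \<union> {Dynamic (Some (FA (VarF v) (DVal d))) [AA t] [FA (VarF v) (DVal d)] | t v d S.
        t \<in> trans W \<and> wr W t v = Some S \<and> d \<in> S}
   \<union> {Dynamic (Some (FA (VarF v) Null)) [AA t] [] | t v.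
        t \<in> trans W \<and> wr W t v = Some {}}
   \<union> {Dynamic None [AA t] [FA (VarF v) d] | t v d S.
        t \<in> trans W \<and> wr W t v = Some S \<and> S \<noteq> {} \<and>
        d \<in> {Null} \<union> DVal ` (adm W v - S)}
   \<union> {Dynamic None [AA t, AA s] [] | t s. t \<in> trans W \<and> s \<in> trans W \<and> t \<noteq> s}
   \<union> {Dynamic None [AA t, FA (PlaceF p) BFalse] [] | t p. t \<in> trans W \<and> p \<in> preset W t}
   \<union> {Dynamic (Some (FA TransF BTrue)) [AA t] [] | t. t \<in> trans W}
   \<union> {Initially (PlaceF (start W)) BTrue}
   \<union> {Initially (PlaceF p) BFalse | p. p \<in> places W \<and> p \<noteq> start W}
   \<union> {Initially (VarF v) Null | v. v \<in> vars_of W}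
   \<union> {Initially TransF BTrue}
   \<union> {Dynamic None (AA t # map enc_term c) [] | t c.
        t \<in> trans W \<and> \<not> guard_valid (dmod W) (gd W t) \<and> c \<in> set (dnf t)}"

definition P_bc ::
  "nat \<Rightarrow> ('v,'d,'p,'t) dawnet \<Rightarrow> ('t \<Rightarrow> ('v,'d) dnf_term list list)
     \<Rightarrow> ((('v,'p) fluent, 'd fval, 't) tatom) rule set" where
  "P_bc l W dnf = P_l l (bc_fluents W) (bc_dom W) (trans W) (bc_laws W dnf)"

definition Phi_inv ::
  "('v,'d,'p,'t) dawnet \<Rightarrow> ((('v,'p) fluent, 'd fval, 't) tatom) lit set \<Rightarrow> nat
     \<Rightarrow> 'p marking \<times> ('v,'d) assignment" where
  "Phi_inv W X i =
     ((\<lambda>p. if sigma i X (PlaceF p) = BTrue then 1 else 0),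
      (\<lambda>v. if v \<in> vars_of W then
              (case sigma i X (VarF v) of DVal d \<Rightarrow> Some d | _ \<Rightarrow> None)
            else None))"

definition tau :: "((('v,'p) fluent, 'd fval, 't) tatom) lit set \<Rightarrow> nat \<Rightarrow> 't" where
  "tau X i = (THE a. Pos (i, AA a) \<in> X)"

end

theory Submission
  imports Defs
begin

(* Every literal of a stable model is supported by a rule whose body holds in it. In
  P_l(bc(W)) a fluent value at time i+1 can only be supported by an inertia law or by an
  effect law of an action executed at time i, and the fluent trans has no inertia law, so
  exactly one transition t = tau_i(X) is executed at each step. Reading the answer set at
  times i and i+1 therefore shows that the preset of t is marked, that the guard of t holds
  (otherwise a DNF constraint is violated) and that marking and assignment change as the
  firing rule prescribes -- except that a place of the postset of t outside its preset is
  only recorded as marked, whereas the firing rule adds a token to it. This gap is closed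
  by 1-safety: by induction on i the configurations read off the answer set are reachable,
  so such a place was empty before the firing. *)

lemma stable_model_consistent:
  assumes "stable_model P X"
  shows "\<not> (Pos a \<in> X \<and> NegC a \<in> X)"
  using assms unfolding stable_model_def consistent_def by blast

lemma stable_model_closed:
  assumes "stable_model P X" "r \<in> P" "rnaf r \<inter> X = {}" "rpos r \<subseteq> X"
  shows "rhead r \<inter> X \<noteq> {}"
  using assms unfolding stable_model_def closed_under_reduct_def by blast

text \<open>Minimality of a stable model: a literal without a rule supporting it could be
  removed from the model.\<close>
lemma stable_model_supported:
  assumes stable: "stable_model P X" and "L \<in> X"
  shows "\<exists>r\<in>P. rnaf r \<inter> X = {} \<and> rpos r \<subseteq> X \<and> L \<in> rhead r"
proof (rule ccontr)
  assume unsupported: "\<not> ?thesis"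
  have "closed_under_reduct P X (X - {L})"
    unfolding closed_under_reduct_def
  proof (intro ballI impI)
    fix r assume r: "r \<in> P" "rnaf r \<inter> X = {}" "rpos r \<subseteq> X - {L}"
    then have "rhead r \<inter> X \<noteq> {}" using stable_model_closed[OF stable] by blast
    moreover have "L \<notin> rhead r" using unsupported r by blast
    ultimately show "rhead r \<inter> (X - {L}) \<noteq> {}" by blast
  qed
  then have "X - {L} = X" using stable unfolding stable_model_def by blast
  with \<open>L \<in> X\<close> show False by blast
qed

section \<open>The translation of BC descriptions without static laws\<close>

definition wf_dynamic_description ::
  "'f set \<Rightarrow> ('f \<Rightarrow> 'val set) \<Rightarrow> ('f,'val,'c) bclaw set \<Rightarrow> bool" where
  "wf_dynamic_description Fl fdom B \<longleftrightarrow>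
     (\<forall>h as bs. Static h as bs \<notin> B) \<and>
     (\<forall>a as bs. Dynamic (Some (AA a)) as bs \<notin> B) \<and>
     (\<forall>f v as bs. Dynamic (Some (FA f v)) as bs \<in> B \<longrightarrow> f \<in> Fl \<and> v \<in> fdom f) \<and>
     (\<forall>f v. Initially f v \<in> B \<longrightarrow> f \<in> Fl \<and> v \<in> fdom f)"

locale bc_answer_set =
  fixes l :: nat and Fl :: "'f set" and fdom :: "'f \<Rightarrow> 'val set" and Act :: "'c set"
    and B :: "('f,'val,'c) bclaw set" and X :: "('f,'val,'c) tatom lit set"
  assumes wf_B: "wf_dynamic_description Fl fdom B"
    and stable: "stable_model (P_l l Fl fdom Act B) X"
begin

lemma no_complementary_literals: "\<not> (Pos a \<in> X \<and> NegC a \<in> X)"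
  using stable_model_consistent[OF stable] .

lemma P_l_fluent_head:
  assumes "r \<in> P_l l Fl fdom Act B" "Pos (j, FA f v) \<in> rhead r"
  shows "f \<in> Fl \<and> v \<in> fdom f \<and> j \<le> l \<and>
    (j = 0 \<or> (\<exists>i as bs. j = Suc i \<and> Dynamic (Some (FA f v)) as bs \<in> B \<and>
                         rpos r = (\<lambda>a. Pos (i, a)) ` set as))"
proof -
  from assms consider (law) L where "L \<in> B" "r \<in> law_rules l L"
    | (choice) "j = 0" "f \<in> Fl" "v \<in> fdom f"
    unfolding P_l_def by auto
  then show ?thesis
  proof cases
    case law
    then show ?thesis
      using assms(2) wf_B unfolding wf_dynamic_description_def
      by (cases L) (auto split: option.splits, blast+)
  qed simp
qed

lemma P_l_action_head:
  assumes "r \<in> P_l l Fl fdom Act B" "Pos (j, AA a) \<in> rhead r"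
  shows "a \<in> Act \<and> j < l"
proof -
  from assms consider (law) L where "L \<in> B" "r \<in> law_rules l L" | (choice) "a \<in> Act" "j < l"
    unfolding P_l_def by auto
  then show ?thesis
  proof cases
    case law
    then show ?thesis
      using assms(2) wf_B unfolding wf_dynamic_description_def
      by (cases L) (auto split: option.splits)
  qed simp
qed

lemma fluent_atom_in_domain:
  assumes "Pos (i, FA f v) \<in> X"
  shows "f \<in> Fl \<and> v \<in> fdom f \<and> i \<le> l"
  using stable_model_supported[OF stable assms] P_l_fluent_head by blast

lemma fluent_atom_supported:
  assumes "Pos (Suc i, FA f v) \<in> X"
  shows "\<exists>as bs. Dynamic (Some (FA f v)) as bs \<in> B \<and> (\<forall>a\<in>set as. Pos (i, a) \<in> X)"
proof -
  obtain r where r: "r \<in> P_l l Fl fdom Act B" "rpos r \<subseteq> X" "Pos (Suc i, FA f v) \<in> rhead r"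
    using stable_model_supported[OF stable assms] by blast
  then obtain as bs where "Dynamic (Some (FA f v)) as bs \<in> B" "rpos r = (\<lambda>a. Pos (i, a)) ` set as"
    using P_l_fluent_head by blast
  with r(2) show ?thesis by blast
qed

lemma action_atom_in_domain:
  assumes "Pos (i, AA a) \<in> X"
  shows "a \<in> Act \<and> i < l"
  using stable_model_supported[OF stable assms] P_l_action_head by blast

lemma fluent_has_value:
  assumes "f \<in> Fl" "i \<le> l"
  shows "\<exists>v\<in>fdom f. Pos (i, FA f v) \<in> X"
proof -
  let ?r = "\<lparr>rhead = {}, rpos = {}, rnaf = (\<lambda>v. Pos (i, FA f v)) ` fdom f\<rparr>
    :: ('f,'val,'c) tatom rule"
  have "?r \<in> P_l l Fl fdom Act B" using assms unfolding P_l_def by blast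
  from stable_model_closed[OF stable this] show ?thesis by auto
qed

lemma fluent_value_unique:
  assumes v: "Pos (i, FA f v) \<in> X" and w: "Pos (i, FA f w) \<in> X"
  shows "v = w"
proof (rule ccontr)
  assume "v \<noteq> w"
  let ?r = "\<lparr>rhead = {NegC (i, FA f v)}, rpos = {Pos (i, FA f w)}, rnaf = {}\<rparr>
    :: ('f,'val,'c) tatom rule"
  have "?r \<in> P_l l Fl fdom Act B"
    using \<open>v \<noteq> w\<close> fluent_atom_in_domain[OF v] fluent_atom_in_domain[OF w]
    unfolding P_l_def by blast
  from stable_model_closed[OF stable this] w have "NegC (i, FA f v) \<in> X" by auto
  with v no_complementary_literals show False by blast
qed

lemma sigma_eqI: "Pos (i, FA f v) \<in> X \<Longrightarrow> sigma i X f = v"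
  unfolding sigma_def using fluent_value_unique by blast

lemma dynamic_law_closed:
  assumes "Dynamic h as bs \<in> B" "i < l"
    and "\<forall>a\<in>set as. Pos (i, a) \<in> X" "\<forall>b\<in>set bs. NegC (Suc i, b) \<notin> X"
  shows "\<exists>a0. h = Some a0 \<and> Pos (Suc i, a0) \<in> X"
proof -
  let ?r = "\<lparr>rhead = (case h of None \<Rightarrow> {} | Some a0 \<Rightarrow> {Pos (Suc i, a0)}),
     rpos = (\<lambda>a. Pos (i, a)) ` set as, rnaf = (\<lambda>b. NegC (Suc i, b)) ` set bs\<rparr>"
  have "?r \<in> P_l l Fl fdom Act B" using assms(1,2) unfolding P_l_def by force
  from stable_model_closed[OF stable this] assms(3,4) have "rhead ?r \<inter> X \<noteq> {}" by auto
  then show ?thesis by (cases h) auto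
qed

lemma dynamic_law_effect:
  "Dynamic (Some a0) as bs \<in> B \<Longrightarrow> i < l \<Longrightarrow> \<forall>a\<in>set as. Pos (i, a) \<in> X \<Longrightarrow>
    \<forall>b\<in>set bs. NegC (Suc i, b) \<notin> X \<Longrightarrow> Pos (Suc i, a0) \<in> X"
  using dynamic_law_closed by blast

lemma dynamic_constraint:
  "Dynamic None as bs \<in> B \<Longrightarrow> i < l \<Longrightarrow> \<forall>a\<in>set as. Pos (i, a) \<in> X \<Longrightarrow>
    \<exists>b\<in>set bs. NegC (Suc i, b) \<in> X"
  using dynamic_law_closed by blast

lemma initially_holds:
  assumes "Initially f v \<in> B"
  shows "Pos (0, FA f v) \<in> X"
proof -
  let ?r = "\<lparr>rhead = {Pos (0, FA f v)}, rpos = {}, rnaf = {}\<rparr> :: ('f,'val,'c) tatom rule"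
  have "?r \<in> P_l l Fl fdom Act B" using assms unfolding P_l_def by force
  from stable_model_closed[OF stable this] show ?thesis by auto
qed

end

section \<open>Firings of DAW-nets\<close>

definition fire_marking :: "('v,'d,'p,'t) dawnet \<Rightarrow> 't \<Rightarrow> 'p marking \<Rightarrow> 'p marking" where
  "fire_marking W t M p =
     (if p \<in> preset W t - postset W t then M p - 1
      else if p \<in> postset W t - preset W t then M p + 1 else M p)"

lemma wf_dawnet_preset_places: "wf_dawnet W \<Longrightarrow> preset W t \<subseteq> places W"
  unfolding wf_dawnet_def preset_def by auto

lemma wf_dawnet_postset_places: "wf_dawnet W \<Longrightarrow> postset W t \<subseteq> places W"
  unfolding wf_dawnet_def postset_def by auto

lemma wf_dawnet_vars_of_DV: "wf_dawnet W \<Longrightarrow> vars_of W \<subseteq> DV (dmod W)"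
  unfolding wf_dawnet_def vars_of_def by blast

lemma wf_dawnet_adm_dm: "wf_dawnet W \<Longrightarrow> adm W v \<subseteq> dm (dmod W) v"
  unfolding wf_dawnet_def adm_def by (fastforce split: option.splits)

lemma valid_firing_cong_places:
  assumes "wf_dawnet W" "valid_firing W (M1, \<eta>) t (M1', \<eta>')"
    and "\<forall>p\<in>places W. M2 p = M1 p" "\<forall>p\<in>places W. M2' p = M1' p"
  shows "valid_firing W (M2, \<eta>) t (M2', \<eta>')"
  using assms wf_dawnet_preset_places[OF assms(1), of t] unfolding valid_firing_def
  by (auto simp: subset_iff)

lemma valid_firing_marking:
  assumes "valid_firing W (M, \<eta>) t (M', \<eta>')"
  shows "\<forall>p\<in>places W. M' p = fire_marking W t M p"
  using assms unfolding valid_firing_def fire_marking_def by auto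

lemma one_safe_postset_unmarked:
  assumes wf: "wf_dawnet W" and safe: "one_safe W"
    and reach: "reachable W (M, \<eta>)" and fire: "valid_firing W (M, \<eta>) t (M', \<eta>')"
    and p: "p \<in> postset W t - preset W t"
  shows "M p = 0"
proof -
  have "p \<in> places W" using p wf_dawnet_postset_places[OF wf] by blast
  moreover have "reachable W (M', \<eta>')" using reach fire by (rule reachable.step)
  ultimately have "M' p \<le> 1" using safe unfolding one_safe_def by blast
  moreover have "M' p = M p + 1"
    using valid_firing_marking[OF fire] \<open>p \<in> places W\<close> p by (simp add: fire_marking_def)
  ultimately show ?thesis by simp
qed

section \<open>Answer sets of the encoding bc(W)\<close>

definition bc_effect :: "('v,'d,'p,'t) dawnet \<Rightarrow> 't \<Rightarrow> ('v,'p) fluent \<Rightarrow> 'd fval \<Rightarrow> bool" where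
  "bc_effect W t f v \<longleftrightarrow>
     (\<exists>p. f = PlaceF p \<and>
        (v = BFalse \<and> p \<in> preset W t - postset W t \<or> v = BTrue \<and> p \<in> postset W t - preset W t)) \<or>
     (\<exists>x S. f = VarF x \<and> wr W t x = Some S \<and> (v = Null \<and> S = {} \<or> v \<in> DVal ` S)) \<or>
     (f = TransF \<and> v = BTrue)"

lemma bc_fluent_law_cases:
  assumes "Dynamic (Some (FA f v)) as bs \<in> bc_laws W dnf"
  shows "f \<noteq> TransF \<and> as = [FA f v] \<or> (\<exists>t\<in>trans W. as = [AA t] \<and> bc_effect W t f v)"
  using assms unfolding bc_laws_def bc_effect_def by auto

lemma wf_dynamic_description_bc_laws:
  assumes wf: "wf_dawnet W"
  shows "wf_dynamic_description (bc_fluents W) (bc_dom W) (bc_laws W dnf)"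
proof -
  have "x \<in> vars_of W" if "t \<in> trans W" "wr W t x = Some S" for t x S
    using that unfolding vars_of_def by blast
  moreover have "d \<in> adm W x" if "t \<in> trans W" "wr W t x = Some S" "d \<in> S" for t x S d
    using that unfolding adm_def by force
  moreover have "start W \<in> places W" using wf unfolding wf_dawnet_def by blast
  ultimately show ?thesis
    using wf_dawnet_preset_places[OF wf] wf_dawnet_postset_places[OF wf]
    unfolding wf_dynamic_description_def bc_laws_def bc_fluents_def
    by (auto simp: subset_iff)
qed

locale dawnet_answer_set =
  fixes W :: "('v,'d,'p,'t) dawnet" and dnf :: "'t \<Rightarrow> ('v,'d) dnf_term list list"
    and l :: nat and X :: "((('v,'p) fluent, 'd fval, 't) tatom) lit set"
  assumes wf: "wf_dawnet W"
    and stable_bc: "stable_model (P_bc l W dnf) X"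

sublocale dawnet_answer_set \<subseteq>
  bc_answer_set l "bc_fluents W" "bc_dom W" "trans W" "bc_laws W dnf" X
  using wf_dynamic_description_bc_laws[OF wf] stable_bc by unfold_locales (simp_all add: P_bc_def)

context dawnet_answer_set
begin

abbreviation marking_at :: "nat \<Rightarrow> 'p marking" where
  "marking_at i \<equiv> fst (Phi_inv W X i)"

abbreviation assignment_at :: "nat \<Rightarrow> ('v,'d) assignment" where
  "assignment_at i \<equiv> snd (Phi_inv W X i)"

lemma action_unique:
  assumes a: "Pos (i, AA a) \<in> X" and b: "Pos (i, AA b) \<in> X"
  shows "a = b"
proof (rule ccontr)
  assume "a \<noteq> b"
  then have "Dynamic None [AA a, AA b] [] \<in> bc_laws W dnf"
    using action_atom_in_domain[OF a] action_atom_in_domain[OF b] by (simp add: bc_laws_def)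
  from dynamic_constraint[OF this] a b action_atom_in_domain[OF a] show False by auto
qed

lemma tau_eqI: "Pos (i, AA a) \<in> X \<Longrightarrow> tau X i = a"
  unfolding tau_def using action_unique by blast

text \<open>There is no inertia law for the fluent trans, so its value at time i+1 must be
  caused by the action executed at time i.\<close>
lemma action_occurs:
  assumes "i < l"
  shows "Pos (i, AA (tau X i)) \<in> X"
proof -
  have "TransF \<in> bc_fluents W" by (simp add: bc_fluents_def)
  then obtain v where "Pos (Suc i, FA TransF v) \<in> X"
    using fluent_has_value assms by (metis Suc_leI)
  then obtain as bs where "Dynamic (Some (FA TransF v)) as bs \<in> bc_laws W dnf"
    and body: "\<forall>a\<in>set as. Pos (i, a) \<in> X"
    using fluent_atom_supported by blast
  then obtain t where "as = [AA t]" using bc_fluent_law_cases by blast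
  with body have "Pos (i, AA t) \<in> X" by simp
  then show ?thesis using tau_eqI by simp
qed

lemma tau_in_trans: "i < l \<Longrightarrow> tau X i \<in> trans W"
  using action_atom_in_domain[OF action_occurs] by blast

lemma inertia:
  assumes "Pos (Suc i, FA f v) \<in> X" "\<not> bc_effect W (tau X i) f v"
  shows "Pos (i, FA f v) \<in> X"
proof -
  obtain as bs where "Dynamic (Some (FA f v)) as bs \<in> bc_laws W dnf"
    and body: "\<forall>a\<in>set as. Pos (i, a) \<in> X"
    using fluent_atom_supported[OF assms(1)] by blast
  then consider "as = [FA f v]" | t where "as = [AA t]" "bc_effect W t f v"
    using bc_fluent_law_cases by blast
  then show ?thesis
  proof cases
    case (2 t)
    with body have "tau X i = t" using tau_eqI by simp
    with 2 assms(2) show ?thesis by simp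
  qed (use body in simp)
qed

lemma marking_eq: "Pos (i, FA (PlaceF p) w) \<in> X \<Longrightarrow>
    marking_at i p = (if w = BTrue then 1 else 0)"
  by (simp add: Phi_inv_def sigma_eqI)

lemma assignment_eq:
  assumes "Pos (i, FA (VarF x) w) \<in> X"
  shows "assignment_at i x = (case w of DVal d \<Rightarrow> Some d | _ \<Rightarrow> None)"
proof -
  have "x \<in> vars_of W" using fluent_atom_in_domain[OF assms] by (auto simp: bc_fluents_def)
  with assms show ?thesis by (simp add: Phi_inv_def sigma_eqI)
qed

lemma assignment_atom:
  assumes "i \<le> l" "x \<in> vars_of W"
  shows "Pos (i, FA (VarF x) (case assignment_at i x of Some d \<Rightarrow> DVal d | None \<Rightarrow> Null)) \<in> X"
proof -
  have "VarF x \<in> bc_fluents W" using assms(2) by (simp add: bc_fluents_def)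
  then obtain w where "w \<in> bc_dom W (VarF x)" "Pos (i, FA (VarF x) w) \<in> X"
    using fluent_has_value assms(1) by blast
  then show ?thesis using assignment_eq by auto
qed

lemma assignment_SomeD:
  assumes "assignment_at i x = Some d" "i \<le> l"
  shows "Pos (i, FA (VarF x) (DVal d)) \<in> X"
proof -
  have "x \<in> vars_of W" using assms(1) by (auto simp: Phi_inv_def split: if_splits)
  with assms show ?thesis using assignment_atom by fastforce
qed

lemma is_assignment_Phi_inv:
  assumes "i \<le> l"
  shows "is_assignment (dmod W) (assignment_at i)"
  unfolding is_assignment_def
proof (intro conjI allI impI subsetI)
  fix x assume "x \<in> dom (assignment_at i)"
  then have "x \<in> vars_of W" by (auto simp: Phi_inv_def split: if_splits)
  then show "x \<in> DV (dmod W)" using wf_dawnet_vars_of_DV[OF wf] by blast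
next
  fix x d assume "assignment_at i x = Some d"
  then have "DVal d \<in> bc_dom W (VarF x)"
    using fluent_atom_in_domain assignment_SomeD assms by blast
  then show "d \<in> dm (dmod W) x" using wf_dawnet_adm_dm[OF wf] by auto
qed

lemma guard_holds:
  assumes admissible: "admissible_dnf W dnf" and i: "i < l"
  shows "holds (dmod W) (assignment_at i) (gd W (tau X i))"
proof (rule ccontr)
  let ?t = "tau X i" and ?\<eta> = "assignment_at i"
  assume violated: "\<not> holds (dmod W) ?\<eta> (gd W ?t)"
  have "is_assignment (dmod W) ?\<eta>" using is_assignment_Phi_inv i by simp
  with violated have invalid: "\<not> guard_valid (dmod W) (gd W ?t)"
    unfolding guard_valid_def by blast
  with admissible tau_in_trans[OF i] \<open>is_assignment (dmod W) ?\<eta>\<close> violated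
  obtain c where c: "c \<in> set (dnf ?t)" "\<forall>x\<in>set c. dnf_term_holds ?\<eta> x"
    and c_vars: "\<forall>x\<in>set c. fst x \<in> vars_of W"
    unfolding admissible_dnf_def by blast
  have "Pos (i, enc_term x) \<in> X" if "x \<in> set c" for x
  proof -
    have "enc_term x = FA (VarF (fst x)) (case ?\<eta> (fst x) of Some d \<Rightarrow> DVal d | None \<Rightarrow> Null)"
      using c(2) that by (cases x rule: enc_term.cases) auto
    then show ?thesis using assignment_atom[of i "fst x"] c_vars that i by (metis less_imp_le)
  qed
  moreover have "Dynamic None (AA ?t # map enc_term c) [] \<in> bc_laws W dnf"
    using tau_in_trans[OF i] invalid c(1) by (simp add: bc_laws_def) blast
  ultimately show False using dynamic_constraint[OF _ i] action_occurs[OF i] by fastforce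
qed

lemma preset_marked:
  assumes i: "i < l" and p: "p \<in> preset W (tau X i)"
  shows "marking_at i p = 1"
proof -
  have "PlaceF p \<in> bc_fluents W"
    using wf_dawnet_preset_places[OF wf] p by (auto simp: bc_fluents_def)
  then obtain v where v: "v \<in> {BTrue, BFalse}" "Pos (i, FA (PlaceF p) v) \<in> X"
    using fluent_has_value[of "PlaceF p" i] i by auto
  have "Dynamic None [AA (tau X i), FA (PlaceF p) BFalse] [] \<in> bc_laws W dnf"
    using tau_in_trans[OF i] p by (simp add: bc_laws_def)
  then have "v \<noteq> BFalse" using dynamic_constraint[OF _ i] action_occurs[OF i] v(2) by force
  with v marking_eq show ?thesis by auto
qed

lemma marking_consumed:
  assumes i: "i < l" and p: "p \<in> preset W (tau X i) - postset W (tau X i)"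
  shows "marking_at (Suc i) p = 0"
proof -
  have "Dynamic (Some (FA (PlaceF p) BFalse)) [AA (tau X i)] [] \<in> bc_laws W dnf"
    using tau_in_trans[OF i] p by (simp add: bc_laws_def)
  from dynamic_law_effect[OF this i] action_occurs[OF i] show ?thesis
    using marking_eq by simp
qed

lemma marking_produced:
  assumes i: "i < l" and p: "p \<in> postset W (tau X i) - preset W (tau X i)"
  shows "marking_at (Suc i) p = 1"
proof -
  have "Dynamic (Some (FA (PlaceF p) BTrue)) [AA (tau X i)] [] \<in> bc_laws W dnf"
    using tau_in_trans[OF i] p by (simp add: bc_laws_def)
  from dynamic_law_effect[OF this i] action_occurs[OF i] show ?thesis
    using marking_eq by simp
qed

lemma marking_unchanged:
  assumes i: "i < l" and "p \<in> places W"
    and "p \<notin> preset W (tau X i) - postset W (tau X i)" "p \<notin> postset W (tau X i) - preset W (tau X i)"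
  shows "marking_at (Suc i) p = marking_at i p"
proof -
  have "PlaceF p \<in> bc_fluents W" using assms(2) by (simp add: bc_fluents_def)
  then obtain v where v: "Pos (Suc i, FA (PlaceF p) v) \<in> X"
    using fluent_has_value i by (metis Suc_leI)
  moreover have "\<not> bc_effect W (tau X i) (PlaceF p) v"
    using assms(3,4) by (auto simp: bc_effect_def)
  ultimately have "Pos (i, FA (PlaceF p) v) \<in> X" by (rule inertia)
  with v show ?thesis using marking_eq by simp
qed

lemma assignment_written:
  assumes i: "i < l" and wr: "wr W (tau X i) x = Some S" "S \<noteq> {}"
  shows "\<exists>d\<in>S. assignment_at (Suc i) x = Some d"
proof (rule ccontr)
  let ?w = "case assignment_at (Suc i) x of Some d \<Rightarrow> DVal d | None \<Rightarrow> Null"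
  assume "\<not> ?thesis"
  then have w_not_written: "?w \<notin> DVal ` S" by (auto split: option.splits)
  have "x \<in> vars_of W" using tau_in_trans[OF i] wr(1) unfolding vars_of_def by blast
  then have w: "Pos (Suc i, FA (VarF x) ?w) \<in> X" using assignment_atom i by simp
  then have "?w \<in> {Null} \<union> DVal ` (adm W x - S)"
    using w_not_written fluent_atom_in_domain by fastforce
  then have "Dynamic None [AA (tau X i)] [FA (VarF x) ?w] \<in> bc_laws W dnf"
    using tau_in_trans[OF i] wr by (simp add: bc_laws_def)
  from dynamic_constraint[OF this i] action_occurs[OF i]
  have "NegC (Suc i, FA (VarF x) ?w) \<in> X" by simp
  with w no_complementary_literals show False by blast
qed

lemma assignment_cleared:
  assumes i: "i < l" and wr: "wr W (tau X i) x = Some {}"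
  shows "assignment_at (Suc i) x = None"
proof -
  have "Dynamic (Some (FA (VarF x) Null)) [AA (tau X i)] [] \<in> bc_laws W dnf"
    using tau_in_trans[OF i] wr by (simp add: bc_laws_def)
  from dynamic_law_effect[OF this i] action_occurs[OF i] show ?thesis
    using assignment_eq by simp
qed

lemma assignment_unchanged:
  assumes i: "i < l" and wr: "wr W (tau X i) x = None"
  shows "assignment_at (Suc i) x = assignment_at i x"
proof (cases "x \<in> vars_of W")
  case True
  let ?w = "case assignment_at (Suc i) x of Some d \<Rightarrow> DVal d | None \<Rightarrow> Null"
  have w: "Pos (Suc i, FA (VarF x) ?w) \<in> X" using assignment_atom i True by simp
  moreover have "\<not> bc_effect W (tau X i) (VarF x) ?w" using wr by (simp add: bc_effect_def)
  ultimately have "Pos (i, FA (VarF x) ?w) \<in> X" by (rule inertia)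
  with w show ?thesis using assignment_eq by (simp split: option.splits)
qed (simp add: Phi_inv_def)

lemma valid_firing_Phi_inv_fire_marking:
  assumes admissible: "admissible_dnf W dnf" and i: "i < l"
  shows "valid_firing W (Phi_inv W X i) (tau X i)
           (fire_marking W (tau X i) (marking_at i), assignment_at (Suc i))"
proof -
  let ?t = "tau X i" and ?\<eta> = "assignment_at i" and ?\<eta>' = "assignment_at (Suc i)"
  have "dom ?\<eta>' = (dom ?\<eta> \<union> {v. \<exists>S. wr W ?t v = Some S \<and> S \<noteq> {}}) - {v. wr W ?t v = Some {}}"
  proof (intro set_eqI)
    fix x show "x \<in> dom ?\<eta>' \<longleftrightarrow>
        x \<in> (dom ?\<eta> \<union> {v. \<exists>S. wr W ?t v = Some S \<and> S \<noteq> {}}) - {v. wr W ?t v = Some {}}"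
      using assignment_written[OF i] assignment_cleared[OF i] assignment_unchanged[OF i]
      by (cases "wr W ?t x") fastforce+
  qed
  moreover have "preset W ?t \<subseteq> {p. marking_at i p > 0}"
    using preset_marked[OF i] by auto
  ultimately show ?thesis
    using tau_in_trans[OF i] guard_holds[OF admissible i]
      assignment_written[OF i] assignment_unchanged[OF i]
    unfolding valid_firing_def fire_marking_def by (simp add: prod.case_eq_if)
qed

lemma marking_Suc_fire_marking:
  assumes i: "i < l"
    and "\<forall>p\<in>postset W (tau X i) - preset W (tau X i). marking_at i p = 0"
  shows "\<forall>p\<in>places W. marking_at (Suc i) p = fire_marking W (tau X i) (marking_at i) p"
  using assms preset_marked[OF i] marking_consumed[OF i] marking_produced[OF i]
    marking_unchanged[OF i] by (simp add: fire_marking_def)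

lemma Phi_inv_initial:
  "\<forall>p\<in>places W. marking_at 0 p = fst (initial_config W) p"
  "assignment_at 0 = snd (initial_config W)"
proof -
  show "\<forall>p\<in>places W. marking_at 0 p = fst (initial_config W) p"
  proof
    fix p assume "p \<in> places W"
    then have "Pos (0, FA (PlaceF p) (if p = start W then BTrue else BFalse)) \<in> X"
      by (intro initially_holds) (simp add: bc_laws_def)
    then show "marking_at 0 p = fst (initial_config W) p"
      using marking_eq by (simp add: initial_config_def)
  qed
  have "assignment_at 0 x = None" for x
  proof (cases "x \<in> vars_of W")
    case True
    then have "Pos (0, FA (VarF x) Null) \<in> X"
      by (intro initially_holds) (simp add: bc_laws_def)
    then show ?thesis using assignment_eq by simp
  qed (simp add: Phi_inv_def)
  then show "assignment_at 0 = snd (initial_config W)"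
    by (auto simp: initial_config_def)
qed

end

locale safe_dawnet_answer_set = dawnet_answer_set +
  assumes admissible: "admissible_dnf W dnf"
    and safe: "one_safe W"
begin

lemma valid_firing_Phi_inv:
  assumes i: "i < l"
    and reach: "reachable W (M, assignment_at i)"
    and M: "\<forall>p\<in>places W. M p = marking_at i p"
  shows "valid_firing W (Phi_inv W X i) (tau X i) (Phi_inv W X (Suc i))"
proof -
  let ?t = "tau X i" and ?M = "marking_at i"
  have fire: "valid_firing W (?M, assignment_at i) ?t
      (fire_marking W ?t ?M, assignment_at (Suc i))"
    using valid_firing_Phi_inv_fire_marking[OF admissible i] by simp
  then have "valid_firing W (M, assignment_at i) ?t
      (fire_marking W ?t ?M, assignment_at (Suc i))"
    using valid_firing_cong_places[OF wf] M by blast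
  then have "\<forall>p\<in>postset W ?t - preset W ?t. M p = 0"
    using one_safe_postset_unmarked[OF wf safe reach] by blast
  then have "\<forall>p\<in>postset W ?t - preset W ?t. ?M p = 0"
    using M wf_dawnet_postset_places[OF wf, of ?t] by fastforce
  then have "\<forall>p\<in>places W. marking_at (Suc i) p = fire_marking W ?t ?M p"
    using marking_Suc_fire_marking[OF i] by blast
  with valid_firing_cong_places[OF wf fire, of ?M "marking_at (Suc i)"]
  show ?thesis by simp
qed

lemma Phi_inv_reachable:
  "i \<le> l \<Longrightarrow> \<exists>M. reachable W (M, assignment_at i) \<and> (\<forall>p\<in>places W. M p = marking_at i p)"
proof (induction i)
  case 0
  then show ?case using reachable.init Phi_inv_initial
    by (metis prod.collapse)
next
  case (Suc i)
  then obtain M where reach: "reachable W (M, assignment_at i)"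
    and M: "\<forall>p\<in>places W. M p = marking_at i p" by auto
  have "valid_firing W (Phi_inv W X i) (tau X i) (Phi_inv W X (Suc i))"
    using valid_firing_Phi_inv Suc.prems reach M by simp
  then have "valid_firing W (M, assignment_at i) (tau X i) (Phi_inv W X (Suc i))"
    using valid_firing_cong_places[OF wf, of "marking_at i"] M
    by (metis prod.collapse)
  then have "reachable W (Phi_inv W X (Suc i))" by (rule reachable.step[OF reach])
  then show ?case by (intro exI[of _ "marking_at (Suc i)"]) simp
qed

end

theorem mainTheorem6:
  fixes W :: "('v,'d,'p,'t) dawnet"
    and dnf :: "'t \<Rightarrow> ('v,'d) dnf_term list list"
    and l :: nat
    and X :: "((('v,'p) fluent, 'd fval, 't) tatom) lit set"
  assumes "wf_dawnet W"
    and "one_safe W"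
    and "admissible_dnf W dnf"
    and "stable_model (P_bc l W dnf) X"
  shows "\<forall>i<l. valid_firing W (Phi_inv W X i) (tau X i) (Phi_inv W X (Suc i))"
proof (intro allI impI)
  interpret safe_dawnet_answer_set W dnf l X
    using assms by unfold_locales
  fix i assume "i < l"
  then have "i \<le> l" by simp
  then obtain M where "reachable W (M, assignment_at i)"
    and "\<forall>p\<in>places W. M p = marking_at i p"
    using Phi_inv_reachable by blast
  with \<open>i < l\<close> show "valid_firing W (Phi_inv W X i) (tau X i) (Phi_inv W X (Suc i))"
    by (rule valid_firing_Phi_inv)
qed

end
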